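(* Let $f\in A[X]$ be monic with discriminant $\Delta=\mathrm{Res}_X(f,f')\neq 0$, $r=v(\Delta)$, and let $N>2r$ be an integer. Let $f_N\in (A/\pi^NA)[X]$ be the reduction of $f$ modulo $\pi^N$ and $S_N\subseteq A/\pi^NA$ its set of roots. Then the number of roots of $f$ in $K$ is at least $|S_N/\approx|$.
   Context: $K$ is a field complete with respect to a non-archimedean discrete valuation $v$, normalized by $v(\pi)=1$ for a uniformizer $\pi$ of the valuation ring $A=\{x\in K: v(x)\geq 0\}$; the residue field $A/\pi A$ is finite. The equivalence relation $\approx$ on $S_N$ is: $x\approx y$ iff either $N\leq r$ and $x=y$, or $N>r$ and $x\equiv y \pmod{\overline{\pi}^{\,r+1}}$, where $\overline{\pi}$ is the image of $\pi$ in $A/\pi^NA$. *)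

theory Defs
  imports "Subresultants.Resultant_Prelim" "HOL-Computational_Algebra.Polynomial"
begin

text \<open>A discrete valuation v on a field, given on nonzero elements (v 0 is irrelevant;
  "x has valuation at least n" is expressed by vge, which treats 0 as having valuation infinity).\<close>

definition vge :: "('k::field \<Rightarrow> int) \<Rightarrow> 'k \<Rightarrow> int \<Rightarrow> bool" where
  "vge v x n \<longleftrightarrow> x = 0 \<or> n \<le> v x"

definition valring :: "('k::field \<Rightarrow> int) \<Rightarrow> 'k set" where
  "valring v = {x. vge v x 0}"

definition normalized_discrete_valuation :: "('k::field \<Rightarrow> int) \<Rightarrow> 'k \<Rightarrow> bool" where
  "normalized_discrete_valuation v uf \<longleftrightarrow>
     (\<forall>x y. x \<noteq> 0 \<longrightarrow> y \<noteq> 0 \<longrightarrow> v (x * y) = v x + v y) \<and>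
     (\<forall>x y. x \<noteq> 0 \<longrightarrow> y \<noteq> 0 \<longrightarrow> x + y \<noteq> 0 \<longrightarrow> min (v x) (v y) \<le> v (x + y)) \<and>
     uf \<noteq> 0 \<and> v uf = 1"

definition valuation_complete :: "('k::field \<Rightarrow> int) \<Rightarrow> bool" where
  "valuation_complete v \<longleftrightarrow>
     (\<forall>s :: nat \<Rightarrow> 'k.
        (\<forall>n. \<exists>M. \<forall>i\<ge>M. \<forall>j\<ge>M. vge v (s i - s j) n) \<longrightarrow>
        (\<exists>L. \<forall>n. \<exists>M. \<forall>i\<ge>M. vge v (s i - L) n))"

definition congr_pi :: "('k::field \<Rightarrow> int) \<Rightarrow> nat \<Rightarrow> 'k rel" where
  "congr_pi v n = {(x, y). x \<in> valring v \<and> y \<in> valring v \<and> vge v (x - y) (int n)}"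

definition finite_residue_field :: "('k::field \<Rightarrow> int) \<Rightarrow> bool" where
  "finite_residue_field v \<longleftrightarrow> finite (valring v // congr_pi v 1)"

definition quot_ring :: "('k::field \<Rightarrow> int) \<Rightarrow> nat \<Rightarrow> 'k set set" where
  "quot_ring v N = valring v // congr_pi v N"

text \<open>S_N: roots of the reduction f_N of f in A / uf^N A, i.e. residue classes
  [x] (x \<in> A) with f(x) \<equiv> 0 mod uf^N (well defined since f has coefficients in A).\<close>
definition roots_mod :: "('k::field \<Rightarrow> int) \<Rightarrow> 'k poly \<Rightarrow> nat \<Rightarrow> 'k set set" where
  "roots_mod v f N = {C \<in> quot_ring v N. \<forall>x\<in>C. vge v (poly f x) (int N)}"

text \<open>The relation \<approx> on S_N: if N \<le> r equality, else congruence modulo the image of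
  uf^(r+1) in A/uf^N A, i.e. representatives differ by an element of uf^(r+1) A + uf^N A.\<close>
definition approx_rel :: "('k::field \<Rightarrow> int) \<Rightarrow> 'k \<Rightarrow> 'k poly \<Rightarrow> nat \<Rightarrow> nat \<Rightarrow> 'k set rel" where
  "approx_rel v uf f N r = {(C, D). C \<in> roots_mod v f N \<and> D \<in> roots_mod v f N \<and>
     ((N \<le> r \<and> C = D) \<or>
      (N > r \<and> (\<exists>x\<in>C. \<exists>y\<in>D. \<exists>a b. a \<in> valring v \<and> b \<in> valring v \<and>
                  x - y = uf ^ (r + 1) * a + uf ^ N * b)))}"

end

theory Submission
  imports Defs "Subresultants.Subresultant"
begin

text \<open>A root class modulo \<open>\<pi>\<^sup>N\<close> is represented by some \<open>x \<in> A\<close> with \<open>v(f(x)) \<ge> N > 2r\<close>.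
  Expanding the Sylvester determinant along a last row made of the entries \<open>x\<^sup>k f(x)\<close> and
  \<open>x\<^sup>k f'(x)\<close> shows that \<open>\<Delta>\<close> is an \<open>A\<close>-linear combination of \<open>f(x)\<close> and \<open>f'(x)\<close>, so
  \<open>e = v(f'(x)) \<le> r\<close>. Newton's iteration from \<open>x\<close> therefore converges in the complete field \<open>K\<close>
  to a root \<open>L\<close> of \<open>f\<close> with \<open>v(L - x) \<ge> N - e > r\<close>. Hence the class of \<open>x\<close> is \<open>\<approx>\<close>-equivalent
  to the class of \<open>L\<close>, and \<open>L \<mapsto> [L]\<close> maps the roots of \<open>f\<close> in \<open>K\<close> onto \<open>S\<^sub>N/\<approx>\<close>.\<close>

lemma card_quotient_le_card:
  assumes "equiv A R" "finite B" "\<And>a. a \<in> A \<Longrightarrow> \<exists>b\<in>B. (a, g b) \<in> R"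
  shows "card (A // R) \<le> card B"
proof -
  have "A // R \<subseteq> (\<lambda>b. R `` {g b}) ` B"
  proof
    fix X assume "X \<in> A // R"
    then obtain a where a: "a \<in> A" "X = R `` {a}" by (auto elim: quotientE)
    then obtain b where b: "b \<in> B" "(a, g b) \<in> R" using assms(3) by blast
    have "X = R `` {g b}" using a(2) equiv_class_eq[OF assms(1) b(2)] by simp
    then show "X \<in> (\<lambda>b. R `` {g b}) ` B" using b(1) by blast
  qed
  then have "card (A // R) \<le> card ((\<lambda>b. R `` {g b}) ` B)"
    by (intro card_mono finite_imageI assms(2))
  also have "\<dots> \<le> card B" by (rule card_image_le[OF assms(2)])
  finally show ?thesis .
qed

definition newton :: "'a::field poly \<Rightarrow> 'a \<Rightarrow> 'a" where
  "newton f x = x - poly f x / poly (pderiv f) x"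

locale discrete_valuation =
  fixes v :: "'k::field \<Rightarrow> int" and uf :: 'k
  assumes normalized: "normalized_discrete_valuation v uf"
begin

lemma v_mult: "x \<noteq> 0 \<Longrightarrow> y \<noteq> 0 \<Longrightarrow> v (x * y) = v x + v y"
  using normalized unfolding normalized_discrete_valuation_def by blast

lemma v_add_ge_min: "x \<noteq> 0 \<Longrightarrow> y \<noteq> 0 \<Longrightarrow> x + y \<noteq> 0 \<Longrightarrow> min (v x) (v y) \<le> v (x + y)"
  using normalized unfolding normalized_discrete_valuation_def by blast

lemma uniformizer_nonzero: "uf \<noteq> 0" and v_uniformizer: "v uf = 1"
  using normalized unfolding normalized_discrete_valuation_def by blast+

lemma v_one [simp]: "v 1 = 0"
  using v_mult[of 1 1] by simp

lemma v_minus [simp]: "v (- x) = v x"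
proof (cases "x = 0")
  case False
  have "v (-1) = 0" using v_mult[of "-1" "-1"] by simp
  then show ?thesis using v_mult[of "-1" x] False by simp
qed simp

lemma vge_zero [simp]: "vge v 0 n"
  unfolding vge_def by simp

lemma vge_minus [simp]: "vge v (- x) n \<longleftrightarrow> vge v x n"
  unfolding vge_def by auto

lemma vge_minus_commute: "vge v (x - y) n \<longleftrightarrow> vge v (y - x) n"
  using vge_minus[of "x - y"] by simp

lemma vge_mono: "vge v x n \<Longrightarrow> m \<le> n \<Longrightarrow> vge v x m"
  unfolding vge_def by auto

lemma vge_add: "vge v x n \<Longrightarrow> vge v y n \<Longrightarrow> vge v (x + y) n"
  unfolding vge_def using v_add_ge_min[of x y] by fastforce

lemma vge_diff: "vge v x n \<Longrightarrow> vge v y n \<Longrightarrow> vge v (x - y) n"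
  using vge_add[of x n "- y"] by simp

lemma vge_mult: "vge v x n \<Longrightarrow> vge v y m \<Longrightarrow> vge v (x * y) (n + m)"
  by (cases "x = 0 \<or> y = 0") (auto simp: vge_def v_mult)

lemma vge_sum: "(\<And>i. i \<in> S \<Longrightarrow> vge v (g i) n) \<Longrightarrow> vge v (sum g S) n"
  by (induction S rule: infinite_finite_induct) (auto intro: vge_add)

lemma zero_if_vge_all: "(\<And>n. vge v x n) \<Longrightarrow> x = 0"
  unfolding vge_def by (metis add1_zle_eq less_le_not_le)

lemma valring_iff_vge: "x \<in> valring v \<longleftrightarrow> vge v x 0"
  unfolding valring_def by simp

lemma valring_if_vge: "vge v x n \<Longrightarrow> 0 \<le> n \<Longrightarrow> x \<in> valring v"
  unfolding valring_iff_vge using vge_mono by blast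

lemma zero_in_valring [simp]: "0 \<in> valring v"
  and one_in_valring [simp]: "1 \<in> valring v"
  unfolding valring_iff_vge vge_def by auto

lemma vge_mult_valring: "vge v x n \<Longrightarrow> y \<in> valring v \<Longrightarrow> vge v (x * y) n"
  unfolding valring_iff_vge using vge_mult[of x n y 0] by simp

lemma valring_add: "x \<in> valring v \<Longrightarrow> y \<in> valring v \<Longrightarrow> x + y \<in> valring v"
  unfolding valring_iff_vge by (rule vge_add)

lemma valring_minus: "x \<in> valring v \<Longrightarrow> - x \<in> valring v"
  unfolding valring_iff_vge by simp

lemma valring_diff: "x \<in> valring v \<Longrightarrow> y \<in> valring v \<Longrightarrow> x - y \<in> valring v"
  unfolding valring_iff_vge by (rule vge_diff)

lemma valring_mult: "x \<in> valring v \<Longrightarrow> y \<in> valring v \<Longrightarrow> x * y \<in> valring v"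
  unfolding valring_iff_vge using vge_mult[of x 0 y 0] by simp

lemma valring_of_nat: "of_nat n \<in> valring v"
  by (induction n) (auto intro: valring_add)

lemma valring_power: "x \<in> valring v \<Longrightarrow> x ^ n \<in> valring v"
  by (induction n) (auto intro: valring_mult)

lemma valring_prod: "(\<And>i. i \<in> S \<Longrightarrow> g i \<in> valring v) \<Longrightarrow> prod g S \<in> valring v"
  by (induction S rule: infinite_finite_induct) (auto intro: valring_mult)

lemma v_uniformizer_power: "uf ^ k \<noteq> 0 \<and> v (uf ^ k) = int k"
proof (induction k)
  case (Suc k)
  then show ?case using v_mult[of uf "uf ^ k"] uniformizer_nonzero v_uniformizer by simp
qed simp

lemma vge_uniformizer_power_mult: "a \<in> valring v \<Longrightarrow> vge v (uf ^ k * a) (int k)"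
  using vge_mult_valring[of "uf ^ k" "int k" a] v_uniformizer_power[of k] by (simp add: vge_def)

lemma vge_imp_uniformizer_power_factor:
  assumes "vge v x (int k)"
  obtains a where "a \<in> valring v" "x = uf ^ k * a"
proof -
  define a where "a = x / uf ^ k"
  have uk: "uf ^ k \<noteq> 0" "v (uf ^ k) = int k" using v_uniformizer_power by auto
  have x: "x = uf ^ k * a" using uk by (simp add: a_def)
  have "vge v a 0"
  proof (cases "a = 0")
    case False
    then have "v x = int k + v a" using v_mult[OF uk(1) False] x uk by simp
    then show ?thesis using assms False x uniformizer_nonzero by (simp add: vge_def)
  qed simp
  then show thesis using that x valring_iff_vge by blast
qed

lemma v_add_eq_if_vge:
  assumes "x \<noteq> 0" "vge v y (v x + 1)"
  shows "x + y \<noteq> 0 \<and> v (x + y) = v x"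
proof (cases "y = 0")
  case False
  have vy: "v x + 1 \<le> v y" using assms False unfolding vge_def by auto
  have nz: "x + y \<noteq> 0"
  proof
    assume "x + y = 0"
    then have "y = - x" by (simp add: eq_neg_iff_add_eq_0 add.commute)
    then show False using vy by simp
  qed
  have "min (v (x + y)) (v (- y)) \<le> v x"
    using v_add_ge_min[of "x + y" "- y"] nz False assms(1) by simp
  then show ?thesis using v_add_ge_min[OF assms(1) False nz] vy nz assms(1) by auto
qed (use assms in simp)

abbreviation valring_poly :: "'k poly \<Rightarrow> bool" where
  "valring_poly f \<equiv> \<forall>i. coeff f i \<in> valring v"

lemma poly_in_valring: "valring_poly f \<Longrightarrow> x \<in> valring v \<Longrightarrow> poly f x \<in> valring v"
proof (induction f rule: pCons_induct)
  case (pCons a p)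
  then show ?case
    by (metis coeff_pCons_0 coeff_pCons_Suc poly_pCons valring_add valring_mult)
qed simp

lemma valring_poly_pderiv: "valring_poly f \<Longrightarrow> valring_poly (pderiv f)"
  unfolding coeff_pderiv by (metis valring_mult valring_of_nat)

lemma poly_add_expansion2:
  assumes "valring_poly f" "x \<in> valring v" "h \<in> valring v"
  obtains G where "G \<in> valring v"
    "poly f (x + h) = poly f x + poly (pderiv f) x * h + h\<^sup>2 * G"
proof -
  have "\<exists>G\<in>valring v. poly f (x + h) = poly f x + poly (pderiv f) x * h + h\<^sup>2 * G"
    using assms(1)
  proof (induction f rule: pCons_induct)
    case (pCons a p)
    have "valring_poly p" using pCons.prems by (metis coeff_pCons_Suc)
    then obtain G where G: "G \<in> valring v"
      "poly p (x + h) = poly p x + poly (pderiv p) x * h + h\<^sup>2 * G"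
      using pCons.IH by blast
    define G' where "G' = poly (pderiv p) x + x * G + h * G"
    have "G' \<in> valring v"
      unfolding G'_def using poly_in_valring[OF valring_poly_pderiv] \<open>valring_poly p\<close> G(1) assms
      by (auto intro: valring_add valring_mult)
    have "poly (pCons a p) (x + h) = a + (x + h) * (poly p x + poly (pderiv p) x * h + h\<^sup>2 * G)"
      by (simp only: poly_pCons G(2))
    also have "\<dots> = poly (pCons a p) x + poly (pderiv (pCons a p)) x * h + h\<^sup>2 * G'"
      by (simp add: pderiv_pCons G'_def algebra_simps power2_eq_square)
    finally show ?case using \<open>G' \<in> valring v\<close> by blast
  qed (intro bexI[of _ 0], auto)
  then show thesis using that by blast
qed

lemma poly_add_expansion1:
  assumes "valring_poly f" "x \<in> valring v" "h \<in> valring v"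
  obtains G where "G \<in> valring v" "poly f (x + h) = poly f x + h * G"
proof -
  obtain G where G: "G \<in> valring v"
    "poly f (x + h) = poly f x + poly (pderiv f) x * h + h\<^sup>2 * G"
    using poly_add_expansion2[OF assms] .
  have "poly (pderiv f) x + h * G \<in> valring v"
    using poly_in_valring[OF valring_poly_pderiv[OF assms(1)] assms(2)] G(1) assms(3)
    by (auto intro: valring_add valring_mult)
  moreover have "poly f (x + h) = poly f x + h * (poly (pderiv f) x + h * G)"
    using G(2) by (simp add: algebra_simps power2_eq_square)
  ultimately show thesis using that by blast
qed

lemma vge_poly_diff:
  assumes "valring_poly f" "x \<in> valring v" "y \<in> valring v" "vge v (x - y) n"
  shows "vge v (poly f x - poly f y) n"
proof -
  obtain G where G: "G \<in> valring v" "poly f (y + (x - y)) = poly f y + (x - y) * G"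
    using poly_add_expansion1[OF assms(1,3) valring_diff[OF assms(2,3)]] .
  have "poly f x - poly f y = (x - y) * G" using G(2) by simp
  then show ?thesis using vge_mult_valring[OF assms(4) G(1)] by simp
qed

lemma newton_step:
  assumes f: "valring_poly f" and y: "y \<in> valring v" and fy: "vge v (poly f y) M"
    and Dy: "poly (pderiv f) y \<noteq> 0" and M: "2 * v (poly (pderiv f) y) < M"
  shows "vge v (newton f y - y) (M - v (poly (pderiv f) y))"
    and "newton f y \<in> valring v"
    and "vge v (poly f (newton f y)) (M + 1)"
    and "poly (pderiv f) (newton f y) \<noteq> 0"
    and "v (poly (pderiv f) (newton f y)) = v (poly (pderiv f) y)"
proof -
  define D where "D = poly (pderiv f) y"
  define h where "h = newton f y - y"
  have D_nonneg: "0 \<le> v D"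
    using poly_in_valring[OF valring_poly_pderiv[OF f] y] Dy by (simp add: D_def valring_iff_vge vge_def)
  have hD: "h * D = - poly f y"
    using Dy by (simp add: h_def D_def newton_def)
  have h_vge: "vge v h (M - v D)"
  proof (cases "h = 0")
    case False
    then have "v h + v D = v (poly f y)"
      using v_mult[of h D] hD Dy by (simp add: D_def)
    moreover have "poly f y \<noteq> 0"
      using hD False Dy by (metis D_def mult_eq_0_iff neg_equal_0_iff_equal)
    ultimately show ?thesis using fy False by (simp add: vge_def)
  qed simp
  then show "vge v (newton f y - y) (M - v (poly (pderiv f) y))" by (simp add: h_def D_def)
  have h_in: "h \<in> valring v"
    using M D_nonneg by (intro valring_if_vge[OF h_vge]) (simp add: D_def)
  then show "newton f y \<in> valring v"
    using valring_add[OF y h_in] by (simp add: h_def)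
  obtain G where G: "G \<in> valring v" "poly f (y + h) = poly f y + D * h + h\<^sup>2 * G"
    using poly_add_expansion2[OF f y h_in] unfolding D_def .
  have "poly f (y + h) = h * h * G"
    using G(2) hD by (simp add: algebra_simps power2_eq_square)
  then have "poly f (newton f y) = h * h * G" by (simp add: h_def)
  then have "vge v (poly f (newton f y)) ((M - v D) + (M - v D))"
    using vge_mult_valring[OF vge_mult[OF h_vge h_vge] G(1)] by simp
  then show "vge v (poly f (newton f y)) (M + 1)"
    by (rule vge_mono) (use M D_nonneg in \<open>simp add: D_def\<close>)
  obtain H where H: "H \<in> valring v" "poly (pderiv f) (y + h) = D + h * H"
    using poly_add_expansion1[OF valring_poly_pderiv[OF f] y h_in] unfolding D_def .
  have "vge v (h * H) (v D + 1)"
    using vge_mult_valring[OF h_vge H(1)] by (rule vge_mono) (use M in \<open>simp add: D_def\<close>)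
  then have "D + h * H \<noteq> 0 \<and> v (D + h * H) = v D"
    using v_add_eq_if_vge Dy by (simp add: D_def)
  then show "poly (pderiv f) (newton f y) \<noteq> 0" "v (poly (pderiv f) (newton f y)) = v D"
    using H(2) by (simp_all add: h_def)
qed

lemma newton_iterates:
  assumes f: "valring_poly f" and x0: "x0 \<in> valring v" and fx0: "vge v (poly f x0) N"
    and Dx0: "poly (pderiv f) x0 \<noteq> 0" and N: "2 * v (poly (pderiv f) x0) < N"
  defines "e \<equiv> v (poly (pderiv f) x0)" and "x \<equiv> \<lambda>k. (newton f ^^ k) x0"
  shows "x k \<in> valring v \<and> vge v (poly f (x k)) (N + int k)
      \<and> poly (pderiv f) (x k) \<noteq> 0 \<and> v (poly (pderiv f) (x k)) = e"
    and "vge v (x (Suc k) - x k) (N - e + int k)"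
proof -
  have x_Suc: "x (Suc k) = newton f (x k)" for k by (simp add: x_def)
  have inv: "x k \<in> valring v \<and> vge v (poly f (x k)) (N + int k)
      \<and> poly (pderiv f) (x k) \<noteq> 0 \<and> v (poly (pderiv f) (x k)) = e" for k
  proof (induction k)
    case 0
    then show ?case using x0 fx0 Dx0 by (simp add: x_def e_def)
  next
    case (Suc k)
    then have "2 * v (poly (pderiv f) (x k)) < N + int k" using N by (simp add: e_def)
    from newton_step[OF f _ _ _ this] Suc show ?case
      by (simp add: x_Suc ac_simps)
  qed
  then show "x k \<in> valring v \<and> vge v (poly f (x k)) (N + int k)
      \<and> poly (pderiv f) (x k) \<noteq> 0 \<and> v (poly (pderiv f) (x k)) = e" .
  have "2 * v (poly (pderiv f) (x k)) < N + int k" using inv[of k] N by (simp add: e_def)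
  from newton_step(1)[OF f _ _ _ this] inv[of k]
  show "vge v (x (Suc k) - x k) (N - e + int k)" by (simp add: x_Suc algebra_simps)
qed

lemma limit_if_vge_increments:
  assumes complete: "valuation_complete v"
    and step: "\<And>k. vge v (s (Suc k) - s k) (c + int k)"
  obtains L where "\<And>i. vge v (L - s i) (c + int i)"
proof -
  have dist: "vge v (s j - s i) (c + int i)" if "i \<le> j" for i j
    using that
  proof (induction j rule: dec_induct)
    case (step j)
    have "vge v (s (Suc j) - s j) (c + int i)" by (rule vge_mono[OF assms(2)]) (use step.hyps in simp)
    from vge_add[OF this step.IH] show ?case by simp
  qed simp
  have "\<forall>n. \<exists>M. \<forall>i\<ge>M. \<forall>j\<ge>M. vge v (s i - s j) n"
  proof
    fix n
    have "vge v (s i - s j) n" if "nat (n - c) \<le> i" "nat (n - c) \<le> j" for i j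
    proof (cases "i \<le> j")
      case True
      then show ?thesis
        using vge_minus_commute vge_mono[OF dist[OF True]] that by simp
    next
      case False
      then show ?thesis using vge_mono[OF dist[of j i]] that by simp
    qed
    then show "\<exists>M. \<forall>i\<ge>M. \<forall>j\<ge>M. vge v (s i - s j) n" by blast
  qed
  then obtain L where L: "\<forall>n. \<exists>M. \<forall>i\<ge>M. vge v (s i - L) n"
    using complete unfolding valuation_complete_def by blast
  have "vge v (L - s i) (c + int i)" for i
  proof -
    obtain M where M: "\<forall>j\<ge>M. vge v (s j - L) (c + int i)" using L by blast
    have "vge v ((s (max i M) - s i) - (s (max i M) - L)) (c + int i)"
      using vge_diff[OF dist[of i "max i M"], of "s (max i M) - L"] M by simp
    then show ?thesis by simp
  qed
  then show thesis using that by blast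
qed

lemma hensel_root:
  assumes "valuation_complete v" and f: "valring_poly f" and x0: "x0 \<in> valring v"
    and fx0: "vge v (poly f x0) N" and Dx0: "poly (pderiv f) x0 \<noteq> 0"
    and N: "2 * v (poly (pderiv f) x0) < N"
  obtains L where "L \<in> valring v" "poly f L = 0" "vge v (L - x0) (N - v (poly (pderiv f) x0))"
proof -
  define e where "e = v (poly (pderiv f) x0)"
  define x where "x k = (newton f ^^ k) x0" for k
  note iterates = newton_iterates[OF f x0 fx0 Dx0 N, folded e_def x_def]
  obtain L where L: "\<And>i. vge v (L - x i) (N - e + int i)"
    using limit_if_vge_increments[OF assms(1) iterates(2)] by blast
  have e_nonneg: "0 \<le> e"
    using poly_in_valring[OF valring_poly_pderiv[OF f] x0] Dx0 by (simp add: e_def valring_iff_vge vge_def)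
  have L_x0: "vge v (L - x0) (N - e)" using L[of 0] by (simp add: x_def)
  then have L_in: "L \<in> valring v"
    using valring_add[OF x0 valring_if_vge[OF L_x0]] N e_nonneg by (simp add: e_def)
  have "poly f L = 0"
  proof (rule zero_if_vge_all)
    fix n
    define i where "i = nat n"
    have "vge v (poly f (x i)) n"
      by (rule vge_mono[of _ "N + int i"])
        (use iterates(1)[of i] N e_nonneg in \<open>auto simp: i_def e_def\<close>)
    moreover have "vge v (poly f L - poly f (x i)) n"
      by (rule vge_mono[OF vge_poly_diff[OF f L_in _ L[of i]]])
        (use iterates(1)[of i] N e_nonneg in \<open>auto simp: i_def e_def\<close>)
    ultimately show "vge v (poly f L) n" using vge_add by fastforce
  qed
  then show thesis using that L_in L_x0 by (simp add: e_def)
qed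

lemma vge_det_if_row_vge:
  assumes A: "A \<in> carrier_mat n n" and k: "k < n"
    and entries: "\<And>i j. i < n \<Longrightarrow> j < n \<Longrightarrow> i \<noteq> k \<Longrightarrow> A $$ (i, j) \<in> valring v"
    and row_k: "\<And>j. j < n \<Longrightarrow> vge v (A $$ (k, j)) m"
  shows "vge v (det A) m"
proof -
  have term_vge: "vge v (signof p * (\<Prod>i = 0..<n. A $$ (i, p i))) m" if perm: "p permutes {0..<n}" for p
  proof -
    have p: "p i < n" if "i < n" for i
      using permutes_in_image[OF perm] that by simp
    have prod_eq: "(\<Prod>i = 0..<n. A $$ (i, p i)) = A $$ (k, p k) * (\<Prod>i \<in> {0..<n} - {k}. A $$ (i, p i))"
      using k by (intro prod.remove) auto
    have "(\<Prod>i \<in> {0..<n} - {k}. A $$ (i, p i)) \<in> valring v"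
      using entries p by (intro valring_prod) auto
    then have "vge v (\<Prod>i = 0..<n. A $$ (i, p i)) m"
      unfolding prod_eq by (rule vge_mult_valring[OF row_k[OF p[OF k]]])
    moreover have "signof p \<in> valring v" by (simp add: sign_def valring_minus)
    ultimately show ?thesis using vge_mult_valring by (metis mult.commute)
  qed
  show ?thesis
    unfolding det_def'[OF A] by (rule vge_sum) (use term_vge in auto)
qed

text \<open>\<open>subresultant_mat 0 f g\<close> is the Sylvester matrix with its last row replaced by
  \<open>\<Sum>\<^sub>i X\<^sup>n\<^sup>-\<^sup>1\<^sup>-\<^sup>i \<cdot> row\<^sub>i\<close>, whose entries are the polynomials \<open>X\<^sup>k f\<close> and \<open>X\<^sup>k g\<close>;
  its determinant is still the resultant.\<close>
lemma vge_resultant_if_vge_at: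
  assumes f: "valring_poly f" and g: "valring_poly g" and deg: "0 < degree f + degree g"
    and x: "x \<in> valring v" and fx: "vge v (poly f x) m" and gx: "vge v (poly g x) m"
  shows "vge v (resultant f g) m"
proof -
  have eval: "comm_ring_hom (\<lambda>p. poly p x)" by unfold_locales auto
  define n where "n = degree f + degree g"
  define M where "M = map_mat (\<lambda>p. poly p x) (subresultant_mat 0 f g)"
  have "resultant f g = poly (det (subresultant_mat 0 f g)) x"
    using subresultant_resultant[of f g] by (simp add: subresultant_def)
  then have res: "resultant f g = det M" unfolding M_def comm_ring_hom.hom_det[OF eval] .
  have M_entry: "M $$ (i, j) = (if j < degree g then
       if i = n - 1 then x ^ (degree g - 1 - j) * poly f x else coeff_int f (degree f - int i + int j)
      else if i = n - 1 then x ^ (degree f - 1 - (j - degree g)) * poly g x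
        else coeff_int g (degree g - int i + int (j - degree g)))"
    if "i < n" "j < n" for i j
    using that subresultant_index_mat[where F = f and G = g and J = 0 and i = i and j = j]
    by (simp add: M_def n_def Let_def poly_monom)
  have coeff_int_in: "coeff_int h k \<in> valring v" if "valring_poly h" for h k
    using that by (simp add: coeff_int_def)
  show ?thesis
    unfolding res
  proof (rule vge_det_if_row_vge[of _ n "n - 1"])
    show "M \<in> carrier_mat n n" by (simp add: M_def n_def carrier_matI)
    show "n - 1 < n" using deg by (simp add: n_def)
    show "M $$ (i, j) \<in> valring v" if "i < n" "j < n" "i \<noteq> n - 1" for i j
      using that f g by (simp add: M_entry coeff_int_in)
    show "vge v (M $$ (n - 1, j)) m" if "j < n" for j
      using that deg fx gx valring_power[OF x]
      by (simp add: M_entry vge_mult_valring mult.commute[of "x ^ _"])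
  qed
qed

lemma resultant_in_valring:
  assumes "valring_poly f" "valring_poly g" "0 < degree f + degree g"
  shows "resultant f g \<in> valring v"
  using vge_resultant_if_vge_at[OF assms zero_in_valring] poly_in_valring[OF _ zero_in_valring] assms
  by (simp add: valring_iff_vge)

lemma v_pderiv_le_v_discriminant:
  assumes f: "valring_poly f" and deg: "0 < degree f" and x: "x \<in> valring v"
    and res: "resultant f (pderiv f) \<noteq> 0"
    and fx: "vge v (poly f x) (v (resultant f (pderiv f)) + 1)"
  shows "poly (pderiv f) x \<noteq> 0 \<and> v (poly (pderiv f) x) \<le> v (resultant f (pderiv f))"
proof (rule ccontr)
  assume "\<not> ?thesis"
  then have "vge v (poly (pderiv f) x) (v (resultant f (pderiv f)) + 1)" by (auto simp: vge_def)
  then have "vge v (resultant f (pderiv f)) (v (resultant f (pderiv f)) + 1)"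
    using deg by (intro vge_resultant_if_vge_at[OF f valring_poly_pderiv[OF f] _ x fx]) simp_all
  then show False using res by (simp add: vge_def)
qed

definition residue_class :: "nat \<Rightarrow> 'k \<Rightarrow> 'k set" where
  "residue_class N x = congr_pi v N `` {x}"

lemma mem_residue_class:
  "y \<in> residue_class N x \<longleftrightarrow> x \<in> valring v \<and> y \<in> valring v \<and> vge v (x - y) (int N)"
  unfolding residue_class_def congr_pi_def by auto

lemma quot_ring_iff: "C \<in> quot_ring v N \<longleftrightarrow> (\<exists>x\<in>valring v. C = residue_class N x)"
  unfolding quot_ring_def residue_class_def quotient_def by auto

lemma vge_diff_in_quot_ring:
  assumes "C \<in> quot_ring v N" "x \<in> C" "y \<in> C"
  shows "vge v (x - y) (int N)"
proof -
  obtain c where "C = residue_class N c" using assms(1) quot_ring_iff by blast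
  then have "vge v ((c - y) - (c - x)) (int N)"
    using assms(2,3) by (rule_tac vge_diff) (simp_all add: mem_residue_class)
  then show ?thesis by simp
qed

lemma roots_mod_iff:
  assumes "valring_poly f"
  shows "C \<in> roots_mod v f N \<longleftrightarrow>
    (\<exists>x\<in>valring v. C = residue_class N x \<and> vge v (poly f x) (int N))"
proof
  assume "C \<in> roots_mod v f N"
  then obtain x where "x \<in> valring v" "C = residue_class N x" "\<forall>y\<in>C. vge v (poly f y) (int N)"
    unfolding roots_mod_def quot_ring_iff by blast
  then show "\<exists>x\<in>valring v. C = residue_class N x \<and> vge v (poly f x) (int N)"
    by (auto simp: mem_residue_class)
next
  assume "\<exists>x\<in>valring v. C = residue_class N x \<and> vge v (poly f x) (int N)"
  then obtain x where x: "x \<in> valring v" "C = residue_class N x" "vge v (poly f x) (int N)"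
    by blast
  have "vge v (poly f y) (int N)" if "y \<in> C" for y
  proof -
    have "vge v (poly f x - (poly f x - poly f y)) (int N)"
      using that x vge_poly_diff[OF assms] by (rule_tac vge_diff) (simp_all add: mem_residue_class)
    then show ?thesis by simp
  qed
  then show "C \<in> roots_mod v f N"
    using x unfolding roots_mod_def quot_ring_iff by blast
qed

lemma approx_rel_iff:
  assumes "r < N"
  shows "(C, D) \<in> approx_rel v uf f N r \<longleftrightarrow> C \<in> roots_mod v f N \<and> D \<in> roots_mod v f N
    \<and> (\<exists>x\<in>C. \<exists>y\<in>D. vge v (x - y) (int r + 1))"
proof -
  have "vge v (x - y) (int r + 1) \<longleftrightarrow>
      (\<exists>a b. a \<in> valring v \<and> b \<in> valring v \<and> x - y = uf ^ (r + 1) * a + uf ^ N * b)" for x y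
  proof
    assume "vge v (x - y) (int r + 1)"
    then obtain a where "a \<in> valring v" "x - y = uf ^ (r + 1) * a"
      using vge_imp_uniformizer_power_factor[of "x - y" "r + 1"] by (auto simp: add.commute)
    then show "\<exists>a b. a \<in> valring v \<and> b \<in> valring v \<and> x - y = uf ^ (r + 1) * a + uf ^ N * b"
      by (intro exI[of _ a] exI[of _ 0]) simp
  next
    assume "\<exists>a b. a \<in> valring v \<and> b \<in> valring v \<and> x - y = uf ^ (r + 1) * a + uf ^ N * b"
    then obtain a b where ab: "a \<in> valring v" "b \<in> valring v" "x - y = uf ^ (r + 1) * a + uf ^ N * b"
      by blast
    have "vge v (uf ^ N * b) (int (r + 1))"
      by (rule vge_mono[OF vge_uniformizer_power_mult[OF ab(2)]]) (use assms in simp)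
    then have "vge v (uf ^ (r + 1) * a + uf ^ N * b) (int (r + 1))"
      by (rule vge_add[OF vge_uniformizer_power_mult[OF ab(1)]])
    then show "vge v (x - y) (int r + 1)" using ab(3) by (simp add: ac_simps)
  qed
  then show ?thesis using assms unfolding approx_rel_def by auto
qed

lemma equiv_approx_rel:
  assumes "valring_poly f" "r < N"
  shows "equiv (roots_mod v f N) (approx_rel v uf f N r)"
proof (rule equivI)
  have close_in_class: "vge v (x - y) (int r + 1)" if "C \<in> roots_mod v f N" "x \<in> C" "y \<in> C" for C x y
    by (rule vge_mono[of _ "int N"]) (use that vge_diff_in_quot_ring[of C N x y] assms(2) in \<open>auto simp: roots_mod_def\<close>)
  show "approx_rel v uf f N r \<subseteq> roots_mod v f N \<times> roots_mod v f N"
  proof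
    fix P assume "P \<in> approx_rel v uf f N r"
    then show "P \<in> roots_mod v f N \<times> roots_mod v f N"
      by (cases P) (simp add: approx_rel_iff[OF assms(2)])
  qed
  show "refl_on (roots_mod v f N) (approx_rel v uf f N r)"
  proof (rule refl_onI)
    fix C assume C: "C \<in> roots_mod v f N"
    then obtain c where "c \<in> valring v" "C = residue_class N c"
      using roots_mod_iff[OF assms(1)] by blast
    then have c: "c \<in> C" by (simp add: mem_residue_class)
    then show "(C, C) \<in> approx_rel v uf f N r"
      unfolding approx_rel_iff[OF assms(2)] using C close_in_class[OF C c c] by blast
  qed
  show "sym (approx_rel v uf f N r)"
  proof (rule symI)
    fix C D assume "(C, D) \<in> approx_rel v uf f N r"
    then obtain x y where "C \<in> roots_mod v f N" "D \<in> roots_mod v f N" "x \<in> C" "y \<in> D"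
      "vge v (x - y) (int r + 1)"
      unfolding approx_rel_iff[OF assms(2)] by blast
    then show "(D, C) \<in> approx_rel v uf f N r"
      unfolding approx_rel_iff[OF assms(2)] using vge_minus_commute[of x y] by blast
  qed
  show "trans (approx_rel v uf f N r)"
  proof (rule transI)
    fix C D E
    assume "(C, D) \<in> approx_rel v uf f N r" "(D, E) \<in> approx_rel v uf f N r"
    then obtain x y y' z where xyz: "C \<in> roots_mod v f N" "D \<in> roots_mod v f N" "E \<in> roots_mod v f N"
      "x \<in> C" "y \<in> D" "y' \<in> D" "z \<in> E" "vge v (x - y) (int r + 1)" "vge v (y' - z) (int r + 1)"
      unfolding approx_rel_iff[OF assms(2)] by blast
    have "vge v ((x - y) + (y - y') + (y' - z)) (int r + 1)"
      using vge_add[OF vge_add[OF xyz(8) close_in_class[OF xyz(2,5,6)]] xyz(9)] .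
    then show "(C, E) \<in> approx_rel v uf f N r"
      using xyz approx_rel_iff[OF assms(2)] by auto
  qed
qed

lemma roots_mod_approx_root:
  assumes "valuation_complete v" and f: "valring_poly f" and deg: "0 < degree f"
    and res: "resultant f (pderiv f) \<noteq> 0" and N: "2 * v (resultant f (pderiv f)) < int N"
    and C: "C \<in> roots_mod v f N"
  defines "r \<equiv> nat (v (resultant f (pderiv f)))"
  shows "\<exists>L. poly f L = 0 \<and> (C, residue_class N L) \<in> approx_rel v uf f N r"
proof -
  define \<Delta> where "\<Delta> = resultant f (pderiv f)"
  have "\<Delta> \<in> valring v"
    using resultant_in_valring[OF f valring_poly_pderiv[OF f]] deg by (simp add: \<Delta>_def)
  then have r: "int r = v \<Delta>" using res by (simp add: r_def \<Delta>_def valring_iff_vge vge_def)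
  obtain x where x: "x \<in> valring v" "C = residue_class N x" "vge v (poly f x) (int N)"
    using C roots_mod_iff[OF f] by blast
  have Dx: "poly (pderiv f) x \<noteq> 0 \<and> v (poly (pderiv f) x) \<le> v \<Delta>"
    using v_pderiv_le_v_discriminant[OF f deg x(1) res] vge_mono[OF x(3)] N r
    by (simp add: \<Delta>_def)
  obtain L where L: "L \<in> valring v" "poly f L = 0" "vge v (L - x) (int N - v (poly (pderiv f) x))"
    using hensel_root[OF assms(1) f x(1,3)] Dx N r by (auto simp: \<Delta>_def)
  have "vge v (x - L) (int r + 1)"
    unfolding vge_minus_commute[of x] by (rule vge_mono[OF L(3)]) (use Dx N r in \<open>simp add: \<Delta>_def\<close>)
  moreover have "residue_class N L \<in> roots_mod v f N"
    using roots_mod_iff[OF f] L by auto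
  moreover have "x \<in> C" "L \<in> residue_class N L"
    using x L(1) by (simp_all add: mem_residue_class)
  moreover have "r < N" using N r by (simp add: \<Delta>_def)
  ultimately have "(C, residue_class N L) \<in> approx_rel v uf f N r"
    using C approx_rel_iff by blast
  then show ?thesis using L(2) by blast
qed

end

theorem lemma3p8:
  fixes v :: "'k::field \<Rightarrow> int" and uf :: 'k and f :: "'k poly" and N :: nat
  assumes "normalized_discrete_valuation v uf"
    and "valuation_complete v"
    and "finite_residue_field v"
    and "\<forall>i. coeff f i \<in> valring v"
    and "lead_coeff f = 1"
    and "resultant f (pderiv f) \<noteq> 0"
    and "int N > 2 * v (resultant f (pderiv f))"
  shows "card {x. poly f x = 0} \<ge>
         card (roots_mod v f N // approx_rel v uf f N (nat (v (resultant f (pderiv f)))))"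
proof -
  interpret discrete_valuation v uf by (rule discrete_valuation.intro) fact
  define r where "r = nat (v (resultant f (pderiv f)))"
  show ?thesis
  proof (cases "degree f = 0")
    case True
    have "coeff f 0 = 1" using assms(5) True by simp
    then have "f = 1" using degree_0_id[OF True] by (metis one_pCons)
    then have "roots_mod v f N = {}"
      using assms(7) by (auto simp: roots_mod_iff vge_def)
    then show ?thesis by simp
  next
    case False
    have "resultant f (pderiv f) \<in> valring v"
      using resultant_in_valring[OF assms(4) valring_poly_pderiv] False assms(4) by simp
    then have "r < N" using assms(6,7) by (simp add: r_def valring_iff_vge vge_def)
    have "card (roots_mod v f N // approx_rel v uf f N r) \<le> card {x. poly f x = 0}"
    proof (rule card_quotient_le_card)
      show "equiv (roots_mod v f N) (approx_rel v uf f N r)"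
        using equiv_approx_rel assms(4) \<open>r < N\<close> by blast
      show "finite {x. poly f x = 0}"
        using assms(5) by (intro poly_roots_finite) auto
      show "\<exists>L\<in>{x. poly f x = 0}. (C, residue_class N L) \<in> approx_rel v uf f N r"
        if "C \<in> roots_mod v f N" for C
        using roots_mod_approx_root[OF assms(2,4) _ assms(6,7) that] False by (simp add: r_def)
    qed
    then show ?thesis by (simp add: r_def)
  qed
qed

end
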